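(* Let $G$ be a matrix with entries from a field $\mathbb{F}$, with row index set $S$ and column index set $T$. Suppose $S=S_1\cup\cdots\cup S_m$ and $T=T_1\cup\cdots\cup T_n$ are partitions into pairwise disjoint sets. Let $s_1,\dots,s_m,t_1,\dots,t_n$ be non-negative integers with $\sum_{i=1}^m s_i=\sum_{j=1}^n t_j=R$. Then there exist subsets $\mathbf{s}_1\subseteq S_1,\dots,\mathbf{s}_m\subseteq S_m$ and $\mathbf{t}_1\subseteq T_1,\dots,\mathbf{t}_n\subseteq T_n$ with $|\mathbf{s}_i|=s_i$ for all $i$ and $|\mathbf{t}_j|=t_j$ for all $j$ such that the $R\times R$ submatrix $G\big(\bigcup_{i=1}^m\mathbf{s}_i,\bigcup_{j=1}^n\mathbf{t}_j\big)$ is nonsingular, if and only if for every $I\subseteq\{1,\dots,m\}$ and every $K\subseteq\{1,\dots,n\}$, \[ \operatorname{rank}\Big(G\big(\textstyle\bigcup_{i\in I}S_i,\bigcup_{k\in K}T_k\big)\Big)\ \ge\ \sum_{i\in I}s_i+\sum_{k\in K}t_k-R . \]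
   Context: For $\mathbf{s}\subseteq S$ and $\mathbf{t}\subseteq T$, $G(\mathbf{s},\mathbf{t})$ denotes the submatrix of $G$ formed by the rows with indices in $\mathbf{s}$ and the columns with indices in $\mathbf{t}$ (the rank of a submatrix with no rows or no columns is $0$). *)

theory Defs
  imports Main
begin

text \<open>The submatrix G(A,B) is G restricted to
  rows in A and columns in B.\<close>

definition rows_lin_indep :: "('r \<Rightarrow> 'c \<Rightarrow> 'a::field) \<Rightarrow> 'r set \<Rightarrow> 'c set \<Rightarrow> bool" where
  "rows_lin_indep G A B \<longleftrightarrow> finite A \<and>
     (\<forall>c. (\<forall>j\<in>B. (\<Sum>i\<in>A. c i * G i j) = 0) \<longrightarrow> (\<forall>i\<in>A. c i = 0))"

text \<open>Rank of the submatrix G(A,B) (row rank: maximal number of linearly independent rows).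
  It is 0 when A or B is empty.\<close>
definition submatrix_rank :: "('r \<Rightarrow> 'c \<Rightarrow> 'a::field) \<Rightarrow> 'r set \<Rightarrow> 'c set \<Rightarrow> nat" where
  "submatrix_rank G A B = Max {card A' | A'. A' \<subseteq> A \<and> rows_lin_indep G A' B}"

definition nonsingular_submatrix :: "('r \<Rightarrow> 'c \<Rightarrow> 'a::field) \<Rightarrow> 'r set \<Rightarrow> 'c set \<Rightarrow> bool" where
  "nonsingular_submatrix G A B \<longleftrightarrow> finite A \<and> finite B \<and> card A = card B \<and>
     submatrix_rank G A B = card A"

end

theory Submission
  imports Defs "HOL-Library.Function_Algebras" "HOL-Library.Disjoint_Sets" HOL.Vector_Spaces
begin

text \<open>
  Proof strategy (matroid intersection, following Edmonds and Rado).
  Extend \<open>G\<close> by the identity on the columns \<open>T\<close>: the vectors of \<open>[G | I]\<close> are indexed by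
  \<open>S + T\<close>, and rows \<open>A\<close> together with the unit vectors outside \<open>B\<close> are independent iff the rows
  of \<open>G(A,B)\<close> are.  Thus \<open>G(A,B)\<close> is a nonsingular \<open>R \<times> R\<close> submatrix for a block selection
  iff \<open>Inl ` A \<union> Inr ` (T - B)\<close> is a common basis of size \<open>card T\<close> of two matroids: the column
  matroid of \<open>[G | I]\<close>, whose rank function is computed from submatrix ranks, and the partition
  matroid allowing \<open>s i\<close> rows from block \<open>i\<close> and \<open>card (Tp j) - t j\<close> columns from block \<open>j\<close>.

  Necessity of the rank
  condition is a rank count in the column matroid; sufficiency applies the intersection
  theorem, the rank condition being exactly its covering hypothesis.
\<close>

definition fscale :: "'a::field \<Rightarrow> ('c \<Rightarrow> 'a) \<Rightarrow> ('c \<Rightarrow> 'a)" where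
  "fscale c f = (\<lambda>x. c * f x)"

interpretation fvs: vector_space "fscale :: 'a::field \<Rightarrow> ('c \<Rightarrow> 'a) \<Rightarrow> ('c \<Rightarrow> 'a)"
  by unfold_locales (auto simp: fscale_def fun_eq_iff algebra_simps)

lemma sum_fun_apply: "(sum f A) x = (\<Sum>a\<in>A. f a x)"
  by (induct A rule: infinite_finite_induct) auto

definition indep_family :: "('e \<Rightarrow> 'c \<Rightarrow> 'a::field) \<Rightarrow> 'e set \<Rightarrow> bool" where
  "indep_family v X \<longleftrightarrow> finite X \<and>
     (\<forall>c. (\<Sum>x\<in>X. fscale (c x) (v x)) = 0 \<longrightarrow> (\<forall>x\<in>X. c x = 0))"

text \<open>The coefficient form agrees with independence of the vector set \<open>v ` X\<close>, provided \<open>v\<close> is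
  injective on \<open>X\<close>; this gives access to the library's exchange and dimension results.\<close>
lemma indep_family_iff_independent:
  fixes v :: "'e \<Rightarrow> 'c \<Rightarrow> 'a::field"
  assumes "finite X"
  shows "indep_family v X \<longleftrightarrow> inj_on v X \<and> fvs.independent (v ` X)"
proof
  assume h: "inj_on v X \<and> fvs.independent (v ` X)"
  show "indep_family v X" unfolding indep_family_def
  proof (intro conjI assms allI impI ballI)
    fix c x assume s: "(\<Sum>x\<in>X. fscale (c x) (v x)) = 0" and x: "x \<in> X"
    define u where "u = (\<lambda>w. c (the_inv_into X v w))"
    have "(\<Sum>w\<in>v ` X. fscale (u w) w) = (\<Sum>x\<in>X. fscale (c x) (v x))"
      using h by (simp add: sum.reindex u_def the_inv_into_f_f)
    hence "\<forall>w\<in>v ` X. u w = 0" using s h fvs.dependent_finite[of "v ` X"] assms by auto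
    thus "c x = 0" using x h by (auto simp: u_def the_inv_into_f_f)
  qed
next
  assume h: "indep_family v X"
  hence h: "\<And>c. (\<Sum>x\<in>X. fscale (c x) (v x)) = 0 \<Longrightarrow> \<forall>x\<in>X. c x = 0"
    by (simp add: indep_family_def)
  have inj: "inj_on v X"
  proof (rule inj_onI, rule ccontr)
    fix x y assume xy: "x \<in> X" "y \<in> X" "v x = v y" "x \<noteq> y"
    define c where "c = (\<lambda>z. if z = x then (1::'a) else if z = y then -1 else 0)"
    have "(\<Sum>z\<in>X. fscale (c z) (v z)) = (\<Sum>z\<in>{x,y}. fscale (c z) (v z))"
      using assms xy by (intro sum.mono_neutral_right) (auto simp: c_def fscale_def fun_eq_iff)
    also have "\<dots> = 0" using xy by (simp add: c_def fscale_def fun_eq_iff)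
    finally have "c x = 0" using h xy(1) by blast
    thus False by (simp add: c_def)
  qed
  moreover have "fvs.independent (v ` X)"
  proof
    assume "fvs.dependent (v ` X)"
    then obtain u where u: "\<exists>w\<in>v`X. u w \<noteq> 0" "(\<Sum>w\<in>v`X. fscale (u w) w) = 0"
      using fvs.dependent_finite[of "v ` X"] assms by auto
    have "(\<Sum>x\<in>X. fscale (u (v x)) (v x)) = 0" using u inj by (simp add: sum.reindex)
    thus False using h[of "\<lambda>x. u (v x)"] u by auto
  qed
  ultimately show "inj_on v X \<and> fvs.independent (v ` X)" by simp
qed

lemma indep_family_subset: "indep_family v Y \<Longrightarrow> X \<subseteq> Y \<Longrightarrow> indep_family v X"
proof -
  assume Y: "indep_family v Y" and XY: "X \<subseteq> Y"
  have fin: "finite Y" "finite X" using Y XY finite_subset by (auto simp: indep_family_def)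
  have "inj_on v Y \<and> fvs.independent (v ` Y)" using Y fin by (simp add: indep_family_iff_independent)
  hence "inj_on v X \<and> fvs.independent (v ` X)"
    using XY by (meson fvs.independent_mono image_mono inj_on_subset)
  thus ?thesis using fin by (simp add: indep_family_iff_independent)
qed

text \<open>Augmentation: a smaller independent family can be extended from a larger one, since
  otherwise the larger one would lie in the span of the smaller.\<close>
lemma indep_family_augment:
  assumes I: "indep_family v I" and J: "indep_family v J" and less: "card I < card J"
  shows "\<exists>x\<in>J - I. indep_family v (insert x I)"
proof (rule ccontr)
  assume no_aug: "\<not> ?thesis"
  have fin: "finite I" "finite J" using I J by (simp_all add: indep_family_def)
  have I': "inj_on v I" "fvs.independent (v ` I)"
    using I fin by (simp_all add: indep_family_iff_independent)
  have J': "inj_on v J" "fvs.independent (v ` J)"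
    using J fin by (simp_all add: indep_family_iff_independent)
  have "v x \<in> fvs.span (v ` I)" if x: "x \<in> J" for x
  proof (cases "v x \<in> v ` I")
    case True thus ?thesis by (rule fvs.span_base)
  next
    case False
    hence "x \<notin> I" by auto
    hence "\<not> indep_family v (insert x I)" using no_aug x by auto
    hence "\<not> fvs.independent (insert (v x) (v ` I))"
      using fin I' False by (auto simp: indep_family_iff_independent)
    thus ?thesis using I' False by (simp add: fvs.independent_insert)
  qed
  hence "card (v ` J) \<le> card (v ` I)"
    using fvs.independent_span_bound[of "v ` I" "v ` J"] fin J' by auto
  thus False using I' J' less by (simp add: card_image)
qed

locale matroid =
  fixes E :: "'e set" and indep :: "'e set \<Rightarrow> bool"
  assumes finite_ground: "finite E"
    and indep_subset_ground: "indep X \<Longrightarrow> X \<subseteq> E"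
    and indep_empty: "indep {}"
    and indep_subset: "indep Y \<Longrightarrow> X \<subseteq> Y \<Longrightarrow> indep X"
    and indep_augment: "indep I \<Longrightarrow> indep J \<Longrightarrow> card I < card J \<Longrightarrow> \<exists>x\<in>J - I. indep (insert x I)"
begin

lemma indep_finite: "indep X \<Longrightarrow> finite X"
  using finite_ground indep_subset_ground finite_subset by blast

definition rk :: "'e set \<Rightarrow> nat" where
  "rk X = Max {card Y | Y. Y \<subseteq> X \<and> indep Y}"

lemma finite_indep_cards: "finite {card Y | Y. Y \<subseteq> X \<and> indep Y}"
proof -
  have "{card Y | Y. Y \<subseteq> X \<and> indep Y} \<subseteq> card ` Pow E" using indep_subset_ground by auto
  thus ?thesis using finite_ground by (meson finite_Pow_iff finite_imageI finite_subset)
qed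

lemma rk_attained: "\<exists>Y. Y \<subseteq> X \<and> indep Y \<and> card Y = rk X"
proof -
  have "rk X \<in> {card Y | Y. Y \<subseteq> X \<and> indep Y}"
    unfolding rk_def using finite_indep_cards indep_empty by (intro Max_in) auto
  thus ?thesis by auto
qed

lemma rk_ge: "Y \<subseteq> X \<Longrightarrow> indep Y \<Longrightarrow> card Y \<le> rk X"
  unfolding rk_def using finite_indep_cards by (intro Max_ge) auto

lemma rk_le_card: "X \<subseteq> E \<Longrightarrow> rk X \<le> card X"
  using rk_attained[of X] by (metis card_mono finite_ground finite_subset)

lemma rk_mono: "X \<subseteq> Y \<Longrightarrow> rk X \<le> rk Y"
  using rk_attained[of X] rk_ge[of _ Y] by (metis order_trans)

lemma rk_empty: "rk {} = 0"
  using rk_attained[of "{}"] by auto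

lemma indep_iff_rk: "X \<subseteq> E \<Longrightarrow> indep X \<longleftrightarrow> rk X = card X"
proof
  assume "X \<subseteq> E" "indep X" thus "rk X = card X" using rk_ge[of X X] rk_le_card[of X] by auto
next
  assume X: "X \<subseteq> E" "rk X = card X"
  then obtain Y where Y: "Y \<subseteq> X" "indep Y" "card Y = card X" using rk_attained[of X] by auto
  have "finite X" using X finite_ground finite_subset by auto
  hence "Y = X" using Y card_subset_eq by blast
  thus "indep X" using Y by simp
qed

lemma indep_extend_to_basis:
  assumes "indep I" "I \<subseteq> X"
  shows "\<exists>J. I \<subseteq> J \<and> J \<subseteq> X \<and> indep J \<and> card J = rk X"
proof -
  define C where "C = {J. I \<subseteq> J \<and> J \<subseteq> X \<and> indep J}"
  have "card ` C \<subseteq> card ` Pow E" using indep_subset_ground by (auto simp: C_def)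
  hence fin: "finite (card ` C)" using finite_ground by (meson finite_Pow_iff finite_imageI finite_subset)
  have "I \<in> C" using assms by (auto simp: C_def)
  hence "Max (card ` C) \<in> card ` C" using fin by (intro Max_in) auto
  then obtain J where J: "J \<in> C" "card J = Max (card ` C)" by auto
  have "card J = rk X"
  proof (rule ccontr)
    assume "card J \<noteq> rk X"
    moreover have "card J \<le> rk X" using J(1) rk_ge by (auto simp: C_def)
    ultimately have less: "card J < rk X" by simp
    obtain K where K: "K \<subseteq> X" "indep K" "card K = rk X" using rk_attained by blast
    then obtain x where x: "x \<in> K - J" "indep (insert x J)"
      using indep_augment[of J K] J less by (auto simp: C_def)
    hence "insert x J \<in> C" using J K by (auto simp: C_def)
    hence "card (insert x J) \<le> card J" using J fin by auto
    moreover have "finite J" using J(1) indep_finite by (simp add: C_def)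
    ultimately show False using x by simp
  qed
  thus ?thesis using J by (auto simp: C_def)
qed

text \<open>Submodularity of the rank: extend a basis of \<open>X \<inter> Y\<close> to one of \<open>X \<union> Y\<close> and count.\<close>
lemma rk_submodular:
  assumes "X \<subseteq> E" "Y \<subseteq> E"
  shows "rk (X \<union> Y) + rk (X \<inter> Y) \<le> rk X + rk Y"
proof -
  obtain I where I: "I \<subseteq> X \<inter> Y" "indep I" "card I = rk (X \<inter> Y)" using rk_attained by blast
  obtain J where J: "I \<subseteq> J" "J \<subseteq> X \<union> Y" "indep J" "card J = rk (X \<union> Y)"
    using indep_extend_to_basis[of I "X \<union> Y"] I by auto
  have fJ: "finite J" using J(3) indep_finite by simp
  have "card (J \<inter> X) \<le> rk X" using J by (intro rk_ge) (auto intro: indep_subset)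
  moreover have "card (J \<inter> Y) \<le> rk Y" using J by (intro rk_ge) (auto intro: indep_subset)
  moreover have "card (J \<inter> X) + card (J \<inter> Y) = card J + card (J \<inter> X \<inter> Y)"
  proof -
    have "J \<inter> X \<union> J \<inter> Y = J" using J by auto
    thus ?thesis using card_Un_Int[of "J \<inter> X" "J \<inter> Y"] fJ by (simp add: Int_ac)
  qed
  moreover have "card I \<le> card (J \<inter> X \<inter> Y)" using I J fJ by (intro card_mono) auto
  ultimately show ?thesis using I J by linarith
qed

lemma rk_Un_le:
  assumes "Y \<subseteq> E"
  shows "rk (X \<union> Y) \<le> rk X + card Y"
proof -
  obtain J where J: "J \<subseteq> X \<union> Y" "indep J" "card J = rk (X \<union> Y)" using rk_attained by blast
  have fin: "finite J" "finite Y" using J(2) indep_finite assms finite_ground finite_subset by auto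
  have "card J \<le> card (J \<inter> X) + card (J - X)"
    using card_Un_le[of "J \<inter> X" "J - X"] by (simp add: Int_Diff_Un)
  moreover have "card (J \<inter> X) \<le> rk X" using J by (intro rk_ge) (auto intro: indep_subset)
  moreover have "card (J - X) \<le> card Y" using J fin by (intro card_mono) auto
  ultimately show ?thesis using J by linarith
qed

end

definition matroid_rank_fn :: "'e set \<Rightarrow> ('e set \<Rightarrow> int) \<Rightarrow> bool" where
  "matroid_rank_fn E f \<longleftrightarrow> f {} = 0 \<and> (\<forall>X\<subseteq>E. \<forall>Y\<subseteq>E. X \<subseteq> Y \<longrightarrow> f X \<le> f Y) \<and>
     (\<forall>X\<subseteq>E. \<forall>Y\<subseteq>E. f (X \<union> Y) + f (X \<inter> Y) \<le> f X + f Y) \<and>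
     (\<forall>X\<subseteq>E. f X \<le> int (card X))"

lemma (in matroid) matroid_rank_fn_rk: "matroid_rank_fn E (\<lambda>X. int (rk X))"
  unfolding matroid_rank_fn_def
proof (intro conjI allI impI)
  show "X \<subseteq> E \<Longrightarrow> Y \<subseteq> E \<Longrightarrow> int (rk (X \<union> Y)) + int (rk (X \<inter> Y)) \<le> int (rk X) + int (rk Y)"
    for X Y using rk_submodular[of X Y] by linarith
qed (simp_all add: rk_empty rk_mono rk_le_card)

lemma matroid_rank_fn_subset: "matroid_rank_fn E f \<Longrightarrow> E' \<subseteq> E \<Longrightarrow> matroid_rank_fn E' f"
  unfolding matroid_rank_fn_def by (meson order_trans)

context
  fixes E :: "'e set" and f :: "'e set \<Rightarrow> int"
  assumes f: "matroid_rank_fn E f"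
begin

lemma rank_fn_empty: "f {} = 0"
  using f by (simp add: matroid_rank_fn_def)

lemma rank_fn_mono: "X \<subseteq> Y \<Longrightarrow> Y \<subseteq> E \<Longrightarrow> f X \<le> f Y"
  using f by (auto simp: matroid_rank_fn_def)

lemma rank_fn_submod: "X \<subseteq> E \<Longrightarrow> Y \<subseteq> E \<Longrightarrow> f (X \<union> Y) + f (X \<inter> Y) \<le> f X + f Y"
  using f by (simp add: matroid_rank_fn_def)

lemma rank_fn_card: "X \<subseteq> E \<Longrightarrow> f X \<le> int (card X)"
  using f by (simp add: matroid_rank_fn_def)

lemma rank_fn_singleton: "e \<in> E \<Longrightarrow> 0 \<le> f {e} \<and> f {e} \<le> 1"
  using rank_fn_mono[of "{}" "{e}"] rank_fn_card[of "{e}"] rank_fn_empty by simp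

lemma rank_fn_insert: "A \<subseteq> E \<Longrightarrow> e \<in> E \<Longrightarrow> e \<notin> A \<Longrightarrow> f (insert e A) \<le> f A + f {e}"
  using rank_fn_submod[of A "{e}"] rank_fn_empty by simp

end

lemma matroid_rank_fn_contract:
  assumes f: "matroid_rank_fn (insert e E) f" and fe: "f {e} = 1" and e: "e \<notin> E" and fin: "finite E"
  shows "matroid_rank_fn E (\<lambda>X. f (insert e X) - 1)"
  unfolding matroid_rank_fn_def
proof (intro conjI allI impI)
  show "f (insert e {}) - 1 = 0" using fe by simp
next
  fix X Y assume "X \<subseteq> E" "Y \<subseteq> E" "X \<subseteq> Y"
  hence "f (insert e X) \<le> f (insert e Y)" by (intro rank_fn_mono[OF f]) auto
  thus "f (insert e X) - 1 \<le> f (insert e Y) - 1" by simp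
next
  fix X Y assume "X \<subseteq> E" "Y \<subseteq> E"
  moreover have "insert e (X \<union> Y) = insert e X \<union> insert e Y"
    and "insert e (X \<inter> Y) = insert e X \<inter> insert e Y" by auto
  ultimately show "f (insert e (X \<union> Y)) - 1 + (f (insert e (X \<inter> Y)) - 1) \<le>
      f (insert e X) - 1 + (f (insert e Y) - 1)"
    using rank_fn_submod[OF f, of "insert e X" "insert e Y"] by auto
next
  fix X assume X: "X \<subseteq> E"
  hence "finite X" "e \<notin> X" using fin e finite_subset by auto
  moreover have "insert e X \<subseteq> insert e E" using X by auto
  ultimately show "f (insert e X) - 1 \<le> int (card X)" using rank_fn_card[OF f, of "insert e X"] by simp
qed

definition covers :: "'e set \<Rightarrow> ('e set \<Rightarrow> int) \<Rightarrow> ('e set \<Rightarrow> int) \<Rightarrow> nat \<Rightarrow> bool" where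
  "covers E f g k \<longleftrightarrow> (\<forall>A\<subseteq>E. int k \<le> f A + g (E - A))"

text \<open>The last claim follows by uncrossing \<open>A\<close> with a hypothetical violating split \<open>B\<close>.\<close>
lemma covers_contract:
  assumes f: "matroid_rank_fn (insert e E) f" and g: "matroid_rank_fn (insert e E) g"
    and e: "e \<notin> E" and cov: "covers (insert e E) f g k"
    and A: "A \<subseteq> E" "f A + g (E - A) < int k"
  shows "k \<noteq> 0" and "f {e} = 1" and "g {e} = 1"
    and "covers E (\<lambda>X. f (insert e X) - 1) (\<lambda>X. g (insert e X) - 1) (k - 1)"
proof -
  have eA: "e \<notin> A" using A e by auto
  have "0 \<le> f A" "0 \<le> g (E - A)"
    using rank_fn_mono[OF f, of "{}" A] rank_fn_mono[OF g, of "{}" "E - A"] A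
      rank_fn_empty[OF f] rank_fn_empty[OF g] by auto
  thus k: "k \<noteq> 0" using A by auto
  have cov': "\<And>X. X \<subseteq> insert e E \<Longrightarrow> int k \<le> f X + g (insert e E - X)"
    using cov by (simp add: covers_def)
  have "insert e E - insert e A = E - A" using e by auto
  hence "int k \<le> f (insert e A) + g (E - A)" using cov'[of "insert e A"] A by auto
  moreover have "f (insert e A) \<le> f A + f {e}" using rank_fn_insert[OF f] A eA by auto
  ultimately show "f {e} = 1" using A rank_fn_singleton[OF f] by force
  have "insert e E - A = insert e (E - A)" using eA by auto
  hence "int k \<le> f A + g (insert e (E - A))" using cov'[of A] A by auto
  moreover have "g (insert e (E - A)) \<le> g (E - A) + g {e}" using rank_fn_insert[OF g, of "E - A" e] e by auto
  ultimately show "g {e} = 1" using A rank_fn_singleton[OF g] by force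
  show "covers E (\<lambda>X. f (insert e X) - 1) (\<lambda>X. g (insert e X) - 1) (k - 1)"
  proof (rule ccontr)
    assume "\<not> ?thesis"
    then obtain B where B: "B \<subseteq> E" "f (insert e B) - 1 + (g (insert e (E - B)) - 1) < int (k - 1)"
      by (auto simp: covers_def not_le)
    have "insert e (E - B) = insert e E - B" using B e by auto
    hence B2: "f (insert e B) + g (insert e E - B) \<le> int k" using B k by auto
    have "A \<inter> insert e B = A \<inter> B" using eA by auto
    hence s1: "f (A \<union> insert e B) + f (A \<inter> B) \<le> f A + f (insert e B)"
      using rank_fn_submod[OF f, of A "insert e B"] A B by auto
    have "(E - A) \<union> (insert e E - B) = insert e E - (A \<inter> B)"
      and "(E - A) \<inter> (insert e E - B) = insert e E - (A \<union> insert e B)" using A B e by auto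
    hence s2: "g (insert e E - (A \<inter> B)) + g (insert e E - (A \<union> insert e B)) \<le> g (E - A) + g (insert e E - B)"
      using rank_fn_submod[OF g, of "E - A" "insert e E - B"] by auto
    have "int k \<le> f (A \<inter> B) + g (insert e E - (A \<inter> B))"
      and "int k \<le> f (A \<union> insert e B) + g (insert e E - (A \<union> insert e B))"
      using cov'[of "A \<inter> B"] cov'[of "A \<union> insert e B"] A B by auto
    thus False using s1 s2 A B2 by linarith
  qed
qed

text \<open>Induction on the ground set: either the condition survives deleting an element \<open>e\<close>, or
  \<open>e\<close> can be put into the common set and contracted.\<close>
theorem matroid_intersection:
  assumes "finite E" "matroid_rank_fn E f" "matroid_rank_fn E g" "covers E f g k"
  shows "\<exists>X\<subseteq>E. card X = k \<and> f X = int k \<and> g X = int k"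
  using assms
proof (induction E arbitrary: f g k rule: finite_induct)
  case empty
  hence "int k \<le> 0" using rank_fn_empty[OF empty.prems(1)] rank_fn_empty[OF empty.prems(2)]
    by (simp add: covers_def)
  thus ?case using rank_fn_empty[OF empty.prems(1)] rank_fn_empty[OF empty.prems(2)] by auto
next
  case (insert e E)
  show ?case
  proof (cases "covers E f g k")
    case True
    moreover have "matroid_rank_fn E f" "matroid_rank_fn E g"
      using insert.prems(1,2) by (auto intro: matroid_rank_fn_subset)
    ultimately show ?thesis using insert.IH by blast
  next
    case False
    then obtain A where A: "A \<subseteq> E" "f A + g (E - A) < int k" by (auto simp: covers_def not_le)
    note contr = covers_contract[OF insert.prems(1,2) insert.hyps(2) insert.prems(3) A]
    obtain X where X: "X \<subseteq> E" "card X = k - 1"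
        "f (insert e X) - 1 = int (k - 1)" "g (insert e X) - 1 = int (k - 1)"
      using insert.IH[OF matroid_rank_fn_contract[OF insert.prems(1) contr(2) insert.hyps(2,1)]
          matroid_rank_fn_contract[OF insert.prems(2) contr(3) insert.hyps(2,1)] contr(4)]
      by blast
    have "e \<notin> X" "finite X" using X insert.hyps finite_subset by auto
    hence "card (insert e X) = k" using X contr(1) by simp
    thus ?thesis using X contr(1) by (intro exI[of _ "insert e X"]) auto
  qed
qed

lemma Inl_Inr_decomp: "Y = Inl ` (Inl -` Y) \<union> Inr ` (Inr -` Y)"
proof (rule set_eqI)
  show "x \<in> Y \<longleftrightarrow> x \<in> Inl ` (Inl -` Y) \<union> Inr ` (Inr -` Y)" for x by (cases x) auto
qed

lemma card_Inl_Inr: "finite A \<Longrightarrow> finite C \<Longrightarrow> card (Inl ` A \<union> Inr ` C) = card A + card C"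
  by (subst card_Un_disjoint) (auto simp: card_image)

lemma card_vimage_Inl_Inr: "finite Y \<Longrightarrow> card Y = card (Inl -` Y) + card (Inr -` Y)"
proof -
  assume "finite Y"
  hence "finite (Inl -` Y)" "finite (Inr -` Y)" by (auto intro: finite_vimageI)
  hence "card (Inl ` (Inl -` Y) \<union> Inr ` (Inr -` Y)) = card (Inl -` Y) + card (Inr -` Y)"
    by (rule card_Inl_Inr)
  thus ?thesis by (simp only: Inl_Inr_decomp[symmetric])
qed

lemma Inl_Inr_Int:
  "(Inl ` A \<union> Inr ` C) \<inter> (Inl ` A' \<union> Inr ` C') = Inl ` (A \<inter> A') \<union> Inr ` (C \<inter> C')"
proof (rule set_eqI)
  show "x \<in> (Inl ` A \<union> Inr ` C) \<inter> (Inl ` A' \<union> Inr ` C') \<longleftrightarrow>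
      x \<in> Inl ` (A \<inter> A') \<union> Inr ` (C \<inter> C')" for x by (cases x) auto
qed

lemma card_Diff_add_card: "finite A \<Longrightarrow> B \<subseteq> A \<Longrightarrow> card (A - B) + card B = card A"
  by (metis card_Diff_subset card_mono finite_subset le_add_diff_inverse2)

context
  fixes P :: "'i \<Rightarrow> 'e set" and N :: "'i set"
  assumes disj: "disjoint_family_on P N" and finN: "finite N" and finP: "\<And>i. i \<in> N \<Longrightarrow> finite (P i)"
begin

lemma card_UN_blocks:
  assumes "I \<subseteq> N" "\<And>i. i \<in> I \<Longrightarrow> X i \<subseteq> P i"
  shows "card (\<Union>i\<in>I. X i) = (\<Sum>i\<in>I. card (X i))"
proof (rule card_UN_disjoint')
  show "disjoint_family_on X I" unfolding disjoint_family_on_def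
  proof (intro ballI impI)
    fix i j assume "i \<in> I" "j \<in> I" "i \<noteq> j"
    hence "P i \<inter> P j = {}" using disjoint_family_onD[OF disj] assms(1) by blast
    thus "X i \<inter> X j = {}" using assms(2) \<open>i \<in> I\<close> \<open>j \<in> I\<close> by blast
  qed
  show "finite (X i)" if "i \<in> I" for i
    using finP[of i] assms that by (meson finite_subset subsetD)
  show "finite I" using assms(1) finN by (rule finite_subset)
qed

lemma card_Int_UN_blocks:
  assumes "I \<subseteq> N"
  shows "card ((\<Union>i\<in>I. P i) \<inter> Y) = (\<Sum>i\<in>I. card (P i \<inter> Y))"
proof -
  have "(\<Union>i\<in>I. P i) \<inter> Y = (\<Union>i\<in>I. P i \<inter> Y)" by blast
  thus ?thesis using card_UN_blocks[OF assms, of "\<lambda>i. P i \<inter> Y"] by simp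
qed

end

lemma UN_blocks_Int:
  assumes "disjoint_family_on P N" "I \<subseteq> N" "\<And>i. i \<in> N \<Longrightarrow> X i \<subseteq> P i"
  shows "(\<Union>i\<in>N. X i) \<inter> (\<Union>i\<in>I. P i) = (\<Union>i\<in>I. X i)"
proof
  show "(\<Union>i\<in>N. X i) \<inter> (\<Union>i\<in>I. P i) \<subseteq> (\<Union>i\<in>I. X i)"
  proof
    fix x assume "x \<in> (\<Union>i\<in>N. X i) \<inter> (\<Union>i\<in>I. P i)"
    then obtain i j where ij: "i \<in> N" "x \<in> X i" "j \<in> I" "x \<in> P j" by auto
    hence "x \<in> P i \<inter> P j" using assms(3) by auto
    hence "i = j" using assms(1,2) ij by (auto simp: disjoint_family_on_def)
    thus "x \<in> (\<Union>i\<in>I. X i)" using ij by auto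
  qed
  show "(\<Union>i\<in>I. X i) \<subseteq> (\<Union>i\<in>N. X i) \<inter> (\<Union>i\<in>I. P i)" using assms(2,3) by blast
qed

lemma UN_blocks_Diff:
  assumes "disjoint_family_on P N" "I \<subseteq> N"
  shows "(\<Union>i\<in>N. P i) - (\<Union>i\<in>I. P i) = (\<Union>i\<in>N - I. P i)"
proof -
  have "P i \<inter> P j = {}" if "i \<in> N - I" "j \<in> I" for i j
    using disjoint_family_onD[OF assms(1), of i j] that assms(2) by auto
  thus ?thesis using assms(2) by blast
qed

text \<open>Rank function of a partition matroid: at most \<open>c i\<close> elements may be taken from block \<open>P i\<close>.\<close>
definition capped_count :: "('i \<Rightarrow> 'e set) \<Rightarrow> ('i \<Rightarrow> nat) \<Rightarrow> 'i set \<Rightarrow> 'e set \<Rightarrow> nat" where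
  "capped_count P c N X = (\<Sum>i\<in>N. min (card (P i \<inter> X)) (c i))"

lemma capped_count_empty: "capped_count P c N {} = 0"
  by (simp add: capped_count_def)

lemma capped_count_mono: "X \<subseteq> Y \<Longrightarrow> finite Y \<Longrightarrow> capped_count P c N X \<le> capped_count P c N Y"
  unfolding capped_count_def by (intro sum_mono min.mono card_mono) auto

text \<open>Truncation \<open>x \<mapsto> min x c\<close> is concave, so it preserves the modular inequality of counting.\<close>
lemma min_concave:
  fixes u w a b c :: nat
  shows "u + w = a + b \<Longrightarrow> w \<le> a \<Longrightarrow> w \<le> b \<Longrightarrow> a \<le> u \<Longrightarrow> b \<le> u \<Longrightarrow>
    min u c + min w c \<le> min a c + min b c"
  by (simp add: min_def)

lemma min_card_submod:
  fixes c :: nat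
  assumes "finite X" "finite Y"
  shows "min (card (P \<inter> (X \<union> Y))) c + min (card (P \<inter> (X \<inter> Y))) c \<le>
         min (card (P \<inter> X)) c + min (card (P \<inter> Y)) c"
proof -
  have fin: "finite (P \<inter> X)" "finite (P \<inter> Y)" "finite (P \<inter> (X \<union> Y))" using assms by auto
  have "card (P \<inter> (X \<union> Y)) + card (P \<inter> (X \<inter> Y)) = card (P \<inter> X) + card (P \<inter> Y)"
    using card_Un_Int[OF fin(1,2)] by (simp add: Int_Un_distrib Int_ac)
  moreover have "card (P \<inter> (X \<inter> Y)) \<le> card (P \<inter> X)" "card (P \<inter> (X \<inter> Y)) \<le> card (P \<inter> Y)"
    "card (P \<inter> X) \<le> card (P \<inter> (X \<union> Y))" "card (P \<inter> Y) \<le> card (P \<inter> (X \<union> Y))"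
    using fin(1) fin(2) fin(3) fin(3) by (auto intro!: card_mono)
  ultimately show ?thesis by (rule min_concave)
qed

lemma capped_count_submod:
  "finite X \<Longrightarrow> finite Y \<Longrightarrow>
    capped_count P c N (X \<union> Y) + capped_count P c N (X \<inter> Y) \<le> capped_count P c N X + capped_count P c N Y"
  unfolding capped_count_def sum.distrib[symmetric] by (intro sum_mono min_card_submod)

lemma capped_count_le_card:
  assumes "disjoint_family_on P N" "finite N" "finite X"
  shows "capped_count P c N X \<le> card X"
proof -
  have "capped_count P c N X \<le> (\<Sum>i\<in>N. card (P i \<inter> X))"
    unfolding capped_count_def by (intro sum_mono) auto
  also have "\<dots> = card (\<Union>i\<in>N. P i \<inter> X)"
    using assms by (intro card_UN_disjoint'[symmetric]) (auto simp: disjoint_family_on_def)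
  also have "\<dots> \<le> card X" using assms by (intro card_mono) auto
  finally show ?thesis .
qed

lemma capped_count_tight:
  assumes disj: "disjoint_family_on P N" and "finite N" "finite X" and X: "X \<subseteq> (\<Union>i\<in>N. P i)"
    and eq: "capped_count P c N X = card X" and i: "i \<in> N"
  shows "card (P i \<inter> X) \<le> c i"
proof -
  have "disjoint_family_on (\<lambda>i. P i \<inter> X) N" using disj by (auto simp: disjoint_family_on_def)
  hence "card (\<Union>i\<in>N. P i \<inter> X) = (\<Sum>i\<in>N. card (P i \<inter> X))"
    using \<open>finite N\<close> \<open>finite X\<close> by (intro card_UN_disjoint') auto
  moreover have "(\<Union>i\<in>N. P i \<inter> X) = X" using X by blast
  ultimately have "card X = (\<Sum>i\<in>N. card (P i \<inter> X))" by simp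
  hence "(\<Sum>i\<in>N. min (card (P i \<inter> X)) (c i)) = (\<Sum>i\<in>N. card (P i \<inter> X))"
    using eq by (simp add: capped_count_def)
  hence "min (card (P i \<inter> X)) (c i) = card (P i \<inter> X)"
    by (rule sum_mono_inv) (simp_all add: i \<open>finite N\<close>)
  thus ?thesis by simp
qed

lemma sum_min_split:
  fixes a c :: "'i \<Rightarrow> nat"
  assumes "finite N"
  shows "(\<Sum>i\<in>N. min (a i) (c i)) = (\<Sum>i\<in>{i\<in>N. a i < c i}. a i) + (\<Sum>i\<in>{i\<in>N. \<not> a i < c i}. c i)"
proof -
  have "(\<Sum>i\<in>N. min (a i) (c i)) = (\<Sum>i\<in>N. if a i < c i then a i else c i)"
    by (rule sum.cong) (simp_all add: min_def)
  also have "\<dots> = (\<Sum>i\<in>N \<inter> {i. a i < c i}. a i) + (\<Sum>i\<in>N \<inter> - {i. a i < c i}. c i)"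
    using assms by (rule sum.If_cases)
  also have "N \<inter> {i. a i < c i} = {i\<in>N. a i < c i}" by auto
  also have "N \<inter> - {i. a i < c i} = {i\<in>N. \<not> a i < c i}" by auto
  finally show ?thesis .
qed

lemma matroid_rank_fn_capped_pair:
  assumes "finite E" "disjoint_family_on P N" "finite N" "disjoint_family_on Q M" "finite M"
  shows "matroid_rank_fn E (\<lambda>X. int (capped_count P c N (Inl -` X) + capped_count Q d M (Inr -` X)))"
  unfolding matroid_rank_fn_def
proof (intro conjI allI impI)
  show "int (capped_count P c N (Inl -` {}) + capped_count Q d M (Inr -` {})) = 0"
    by (simp add: capped_count_empty)
next
  fix X Y assume XY: "X \<subseteq> E" "Y \<subseteq> E" "X \<subseteq> Y"
  hence fin: "finite (Inl -` Y)" "finite (Inr -` Y)"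
    using assms(1) finite_subset finite_vimageI[OF _ inj_Inl] finite_vimageI[OF _ inj_Inr] by blast+
  have "capped_count P c N (Inl -` X) \<le> capped_count P c N (Inl -` Y)"
    using XY fin by (intro capped_count_mono) auto
  moreover have "capped_count Q d M (Inr -` X) \<le> capped_count Q d M (Inr -` Y)"
    using XY fin by (intro capped_count_mono) auto
  ultimately show "int (capped_count P c N (Inl -` X) + capped_count Q d M (Inr -` X))
      \<le> int (capped_count P c N (Inl -` Y) + capped_count Q d M (Inr -` Y))" by simp
next
  fix X Y assume XY: "X \<subseteq> E" "Y \<subseteq> E"
  hence fin: "finite (Inl -` X)" "finite (Inr -` X)" "finite (Inl -` Y)" "finite (Inr -` Y)"
    using assms(1) finite_subset finite_vimageI[OF _ inj_Inl] finite_vimageI[OF _ inj_Inr] by blast+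
  show "int (capped_count P c N (Inl -` (X \<union> Y)) + capped_count Q d M (Inr -` (X \<union> Y))) +
      int (capped_count P c N (Inl -` (X \<inter> Y)) + capped_count Q d M (Inr -` (X \<inter> Y)))
      \<le> int (capped_count P c N (Inl -` X) + capped_count Q d M (Inr -` X)) +
        int (capped_count P c N (Inl -` Y) + capped_count Q d M (Inr -` Y))"
    using capped_count_submod[OF fin(1,3), of P c N] capped_count_submod[OF fin(2,4), of Q d M]
    by (simp add: vimage_Un vimage_Int)
next
  fix X assume "X \<subseteq> E"
  hence fin: "finite X" using assms(1) finite_subset by auto
  hence "capped_count P c N (Inl -` X) \<le> card (Inl -` X)" "capped_count Q d M (Inr -` X) \<le> card (Inr -` X)"
    using assms by (simp_all add: capped_count_le_card finite_vimageI)
  thus "int (capped_count P c N (Inl -` X) + capped_count Q d M (Inr -` X)) \<le> int (card X)"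
    using card_vimage_Inl_Inr[OF fin] by simp
qed

lemma rows_lin_indep_empty: "rows_lin_indep G {} B"
  by (simp add: rows_lin_indep_def)

lemma finite_indep_row_cards: "finite A \<Longrightarrow> finite {card A' | A'. A' \<subseteq> A \<and> rows_lin_indep G A' B}"
  by (rule finite_subset[of _ "card ` Pow A"]) auto

lemma submatrix_rank_attained:
  "finite A \<Longrightarrow> \<exists>A'\<subseteq>A. rows_lin_indep G A' B \<and> card A' = submatrix_rank G A B"
proof -
  assume "finite A"
  hence "submatrix_rank G A B \<in> {card A' | A'. A' \<subseteq> A \<and> rows_lin_indep G A' B}"
    unfolding submatrix_rank_def
    using finite_indep_row_cards[OF \<open>finite A\<close>, of G B] rows_lin_indep_empty[of G B]
    by (intro Max_in) auto
  thus ?thesis by auto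
qed

lemma submatrix_rank_ge:
  "finite A \<Longrightarrow> A' \<subseteq> A \<Longrightarrow> rows_lin_indep G A' B \<Longrightarrow> card A' \<le> submatrix_rank G A B"
  unfolding submatrix_rank_def using finite_indep_row_cards[of A G B] by (intro Max_ge) auto

lemma nonsingular_submatrix_iff:
  assumes "finite A" "finite B" "card A = card B"
  shows "nonsingular_submatrix G A B \<longleftrightarrow> rows_lin_indep G A B"
proof
  assume "nonsingular_submatrix G A B"
  moreover obtain A' where "A' \<subseteq> A" "rows_lin_indep G A' B" "card A' = submatrix_rank G A B"
    using submatrix_rank_attained[OF assms(1)] by blast
  ultimately show "rows_lin_indep G A B"
    using assms(1) card_subset_eq by (metis nonsingular_submatrix_def)
next
  assume indep: "rows_lin_indep G A B"
  obtain A' where "A' \<subseteq> A" "card A' = submatrix_rank G A B"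
    using submatrix_rank_attained[OF assms(1)] by blast
  hence "submatrix_rank G A B \<le> card A" using assms(1) card_mono by metis
  moreover have "card A \<le> submatrix_rank G A B" using submatrix_rank_ge[OF assms(1) order_refl indep] .
  ultimately show "nonsingular_submatrix G A B" using assms by (simp add: nonsingular_submatrix_def)
qed

text \<open>The extended matrix \<open>[G | I]\<close>, as a family of vectors in \<open>'c \<Rightarrow> 'a\<close> indexed by the disjoint
  union of the rows of \<open>G\<close> (restricted to the columns \<open>T\<close>) and the unit vectors of \<open>T\<close>.\<close>
definition ext_vec :: "('r \<Rightarrow> 'c \<Rightarrow> 'a::field) \<Rightarrow> 'c set \<Rightarrow> ('r + 'c) \<Rightarrow> 'c \<Rightarrow> 'a" where
  "ext_vec G T x = (case x of Inl i \<Rightarrow> (\<lambda>j. if j \<in> T then G i j else 0)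
                            | Inr j \<Rightarrow> (\<lambda>j'. if j' = j then 1 else 0))"

lemma ext_vec_comb_apply:
  assumes "finite A" "finite C" "C \<subseteq> T"
  shows "(\<Sum>x\<in>Inl ` A \<union> Inr ` C. fscale (c x) (ext_vec G T x)) j =
         (if j \<in> T then (\<Sum>i\<in>A. c (Inl i) * G i j) else 0) + (if j \<in> C then c (Inr j) else 0)"
proof -
  have "(\<Sum>x\<in>Inl ` A \<union> Inr ` C. fscale (c x) (ext_vec G T x)) j =
      (\<Sum>x\<in>Inl ` A \<union> Inr ` C. c x * ext_vec G T x j)"
    by (simp add: sum_fun_apply fscale_def)
  also have "\<dots> = (\<Sum>i\<in>A. c (Inl i) * ext_vec G T (Inl i) j) + (\<Sum>j'\<in>C. c (Inr j') * ext_vec G T (Inr j') j)"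
    using assms(1,2) by (subst sum.union_disjoint) (auto simp: sum.reindex)
  also have "(\<Sum>i\<in>A. c (Inl i) * ext_vec G T (Inl i) j) = (if j \<in> T then (\<Sum>i\<in>A. c (Inl i) * G i j) else 0)"
    by (simp add: ext_vec_def)
  also have "(\<Sum>j'\<in>C. c (Inr j') * ext_vec G T (Inr j') j) = (\<Sum>j'\<in>C. if j = j' then c (Inr j') else 0)"
    by (intro sum.cong) (auto simp: ext_vec_def)
  also have "\<dots> = (if j \<in> C then c (Inr j) else 0)"
    using assms by (simp add: sum.delta)
  finally show ?thesis .
qed

text \<open>Rows \<open>A\<close> together with the unit vectors outside \<open>B\<close> are independent in \<open>[G | I]\<close> iff the rows
  of the submatrix \<open>G(A,B)\<close> are independent: the unit vectors exactly absorb the columns \<open>T - B\<close>.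
  First direction: a dependency of the rows of \<open>G(A,B)\<close> extends to \<open>[G | I]\<close> by cancelling the
  remaining columns with unit vectors.\<close>
lemma rows_indep_of_ext_indep:
  assumes "finite A" "finite T" "B \<subseteq> T"
    and indep: "indep_family (ext_vec G T) (Inl ` A \<union> Inr ` (T - B))"
  shows "rows_lin_indep G A B"
  unfolding rows_lin_indep_def
proof (intro conjI assms(1) allI impI ballI)
  fix c' i assume c': "\<forall>j\<in>B. (\<Sum>i\<in>A. c' i * G i j) = 0" and i: "i \<in> A"
  define c where "c x = (case x of Inl i \<Rightarrow> c' i | Inr j \<Rightarrow> - (\<Sum>i\<in>A. c' i * G i j))" for x
  have "(\<Sum>x\<in>Inl ` A \<union> Inr ` (T - B). fscale (c x) (ext_vec G T x)) j = 0" for j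
    using ext_vec_comb_apply[OF assms(1), of "T - B" T c G j] assms(2,3) c' by (auto simp: c_def)
  hence "(\<Sum>x\<in>Inl ` A \<union> Inr ` (T - B). fscale (c x) (ext_vec G T x)) = 0" by (simp add: fun_eq_iff)
  hence "c (Inl i) = 0" using indep i unfolding indep_family_def by blast
  thus "c' i = 0" by (simp add: c_def)
qed

text \<open>Converse: in a dependency of \<open>[G | I]\<close> the coordinates in \<open>B\<close> give a dependency of the rows
  of \<open>G(A,B)\<close>, and then the remaining coordinates force the unit vector coefficients to vanish.\<close>
lemma ext_indep_of_rows_indep:
  assumes "finite A" "finite T" "B \<subseteq> T" and r: "rows_lin_indep G A B"
  shows "indep_family (ext_vec G T) (Inl ` A \<union> Inr ` (T - B))"
  unfolding indep_family_def
proof (intro conjI allI impI)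
  show "finite (Inl ` A \<union> Inr ` (T - B))" using assms(1,2) by simp
  fix c assume s: "(\<Sum>x\<in>Inl ` A \<union> Inr ` (T - B). fscale (c x) (ext_vec G T x)) = 0"
  have cj: "(if j \<in> T then (\<Sum>i\<in>A. c (Inl i) * G i j) else 0) + (if j \<in> T - B then c (Inr j) else 0) = 0"
    for j using ext_vec_comb_apply[OF assms(1), of "T - B" T c G j] assms(2) s by simp
  have "(\<Sum>i\<in>A. c (Inl i) * G i j) = 0" if "j \<in> B" for j
    using cj[of j] that assms(3) by auto
  hence rows: "\<forall>i\<in>A. c (Inl i) = 0"
    using r unfolding rows_lin_indep_def by (auto dest!: spec[of _ "\<lambda>i. c (Inl i)"])
  have "c (Inr j) = 0" if "j \<in> T - B" for j using cj[of j] rows that by simp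
  thus "\<forall>x\<in>Inl ` A \<union> Inr ` (T - B). c x = 0" using rows by auto
qed

lemma indep_ext_vec_iff:
  assumes "finite A" "finite T" "B \<subseteq> T"
  shows "indep_family (ext_vec G T) (Inl ` A \<union> Inr ` (T - B)) \<longleftrightarrow> rows_lin_indep G A B"
  using rows_indep_of_ext_indep[OF assms] ext_indep_of_rows_indep[OF assms] by blast

locale finite_matrix =
  fixes G :: "'r \<Rightarrow> 'c \<Rightarrow> 'a::field" and S :: "'r set" and T :: "'c set"
  assumes finite_rows: "finite S" and finite_cols: "finite T"
begin

abbreviation ground :: "('r + 'c) set" where "ground \<equiv> Inl ` S \<union> Inr ` T"

definition ext_indep :: "('r + 'c) set \<Rightarrow> bool" where
  "ext_indep X \<longleftrightarrow> X \<subseteq> ground \<and> indep_family (ext_vec G T) X"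

sublocale M: matroid ground ext_indep
proof
  show "finite ground" using finite_rows finite_cols by simp
  show "ext_indep X \<Longrightarrow> X \<subseteq> ground" for X by (simp add: ext_indep_def)
  show "ext_indep {}" by (simp add: ext_indep_def indep_family_def)
  show "ext_indep Y \<Longrightarrow> X \<subseteq> Y \<Longrightarrow> ext_indep X" for X Y
    by (auto simp: ext_indep_def intro: indep_family_subset)
  show "\<exists>x\<in>J - I. ext_indep (insert x I)" if IJ: "ext_indep I" "ext_indep J" "card I < card J" for I J
  proof -
    obtain x where "x \<in> J - I" "indep_family (ext_vec G T) (insert x I)"
      using indep_family_augment[of "ext_vec G T" I J] IJ unfolding ext_indep_def by blast
    moreover have "insert x I \<subseteq> ground" using IJ calculation(1) unfolding ext_indep_def by blast
    ultimately show ?thesis unfolding ext_indep_def by blast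
  qed
qed

lemma ext_indep_iff:
  assumes A: "A \<subseteq> S" and B: "B \<subseteq> T"
  shows "ext_indep (Inl ` A \<union> Inr ` (T - B)) \<longleftrightarrow> rows_lin_indep G A B"
proof -
  have "finite A" using A finite_rows by (rule finite_subset)
  moreover have "Inl ` A \<union> Inr ` (T - B) \<subseteq> ground" using A by auto
  ultimately show ?thesis using indep_ext_vec_iff[OF _ finite_cols B] by (simp add: ext_indep_def)
qed

text \<open>The unit vectors of \<open>T\<close> already have rank \<open>card T\<close>, and no row of \<open>G\<close> can be added to
  them; hence by augmentation no independent set is larger.\<close>
lemma rk_le_card_cols: "M.rk X \<le> card T"
proof (rule ccontr)
  assume "\<not> ?thesis"
  moreover obtain J where J: "J \<subseteq> X" "ext_indep J" "card J = M.rk X" using M.rk_attained by blast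
  moreover have units: "ext_indep (Inr ` T)"
    using ext_indep_iff[of "{}" "{}"] rows_lin_indep_empty by simp
  ultimately obtain x where x: "x \<in> J - Inr ` T" "ext_indep (insert x (Inr ` T))"
    using M.indep_augment[OF units J(2)] by (auto simp: card_image)
  moreover have "J \<subseteq> ground" using J(2) by (rule M.indep_subset_ground)
  ultimately obtain i where i: "x = Inl i" "i \<in> S" by blast
  hence "insert x (Inr ` T) = Inl ` {i} \<union> Inr ` (T - {})" by auto
  hence "rows_lin_indep G {i} {}" using ext_indep_iff[of "{i}" "{}"] x i by simp
  thus False unfolding rows_lin_indep_def by (auto dest!: spec[of _ "\<lambda>_. 1"])
qed

lemma rk_transversal:
  assumes A: "A \<subseteq> S" and B: "B \<subseteq> T"
  shows "M.rk (Inl ` A \<union> Inr ` (T - B)) = card (T - B) + submatrix_rank G A B"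
proof (rule antisym)
  have fA: "finite A" using A finite_rows by (rule finite_subset)
  have fTB: "finite (T - B)" using finite_cols by simp
  have units: "ext_indep (Inr ` (T - B))" using ext_indep_iff[of "{}" B] B rows_lin_indep_empty by simp
  obtain J where J: "Inr ` (T - B) \<subseteq> J" "J \<subseteq> Inl ` A \<union> Inr ` (T - B)" "ext_indep J"
     "card J = M.rk (Inl ` A \<union> Inr ` (T - B))"
    using M.indep_extend_to_basis[OF units, of "Inl ` A \<union> Inr ` (T - B)"] by blast
  define A' where "A' = Inl -` J"
  have "Inr -` J = T - B" using J(1,2) by blast
  hence JA: "J = Inl ` A' \<union> Inr ` (T - B)" unfolding A'_def by (metis Inl_Inr_decomp)
  have A'A: "A' \<subseteq> A" using J(2) unfolding A'_def by blast
  hence fA': "finite A'" using fA by (rule finite_subset)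
  have "rows_lin_indep G A' B" using ext_indep_iff[of A' B] A'A A B J(3) JA by auto
  hence "card A' \<le> submatrix_rank G A B" using fA A'A by (intro submatrix_rank_ge)
  thus "M.rk (Inl ` A \<union> Inr ` (T - B)) \<le> card (T - B) + submatrix_rank G A B"
    using J(4) JA card_Inl_Inr[OF fA' fTB] by simp
  obtain A' where A': "A' \<subseteq> A" "rows_lin_indep G A' B" "card A' = submatrix_rank G A B"
    using submatrix_rank_attained[OF fA] by blast
  hence fA': "finite A'" using fA finite_subset by blast
  have "ext_indep (Inl ` A' \<union> Inr ` (T - B))" using ext_indep_iff[of A' B] A' A B by auto
  hence "card (Inl ` A' \<union> Inr ` (T - B)) \<le> M.rk (Inl ` A \<union> Inr ` (T - B))"
    using A'(1) by (intro M.rk_ge) auto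
  thus "card (T - B) + submatrix_rank G A B \<le> M.rk (Inl ` A \<union> Inr ` (T - B))"
    using card_Inl_Inr[OF fA' fTB] A'(3) by simp
qed

lemma submatrix_rank_le_card_cols:
  assumes "A \<subseteq> S" "B \<subseteq> T"
  shows "submatrix_rank G A B \<le> card B"
proof -
  have "card (T - B) + submatrix_rank G A B \<le> card T"
    using rk_transversal[OF assms] rk_le_card_cols[of "Inl ` A \<union> Inr ` (T - B)"] by simp
  moreover have "card (T - B) + card B = card T" using finite_cols assms(2) by (rule card_Diff_add_card)
  ultimately show ?thesis by linarith
qed

text \<open>Cut bound behind the rank condition: the set \<open>W\<close> of rows \<open>A\<close> and unit vectors outside \<open>B\<close>
  lies in \<open>Z\<close> up to its elements outside \<open>Z\<close>, each of which adds at most one to the rank.\<close>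
lemma rk_transversal_cut:
  assumes Z: "Z \<subseteq> ground" and A: "A \<subseteq> S" and B: "B \<subseteq> T"
  shows "card (T - B) + submatrix_rank G A B \<le>
    M.rk Z + card (A \<inter> Inl -` (ground - Z)) + card ((T - B) \<inter> Inr -` (ground - Z))"
proof -
  define W where "W = Inl ` A \<union> Inr ` (T - B)"
  have W: "W \<subseteq> ground" using A by (auto simp: W_def)
  have fin: "finite (A \<inter> Inl -` (ground - Z))" "finite ((T - B) \<inter> Inr -` (ground - Z))"
    using A finite_rows finite_cols finite_subset by auto
  have "W \<inter> (ground - Z) = Inl ` (A \<inter> Inl -` (ground - Z)) \<union> Inr ` ((T - B) \<inter> Inr -` (ground - Z))"
    unfolding W_def by (subst (2) Inl_Inr_decomp) (rule Inl_Inr_Int)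
  hence card_W: "card (W \<inter> (ground - Z)) = card (A \<inter> Inl -` (ground - Z)) + card ((T - B) \<inter> Inr -` (ground - Z))"
    using card_Inl_Inr[OF fin] by simp
  have "card (T - B) + submatrix_rank G A B = M.rk W" unfolding W_def using rk_transversal[OF A B] by simp
  also have "\<dots> \<le> M.rk (Z \<union> (W \<inter> (ground - Z)))" using W by (intro M.rk_mono) blast
  also have "\<dots> \<le> M.rk Z + card (W \<inter> (ground - Z))" by (rule M.rk_Un_le) blast
  finally show ?thesis using card_W by simp
qed

end

locale partitioned_matrix = finite_matrix G S T for G :: "'r \<Rightarrow> 'c \<Rightarrow> 'a::field" and S T +
  fixes Sp :: "nat \<Rightarrow> 'r set" and Tp :: "nat \<Rightarrow> 'c set" and m n R :: nat and s t :: "nat \<Rightarrow> nat"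
  assumes S_blocks: "S = (\<Union>i\<in>{1..m}. Sp i)" and T_blocks: "T = (\<Union>j\<in>{1..n}. Tp j)"
    and disj_S: "disjoint_family_on Sp {1..m}" and disj_T: "disjoint_family_on Tp {1..n}"
    and sum_s: "(\<Sum>i=1..m. s i) = R" and sum_t: "(\<Sum>j=1..n. t j) = R"
begin

abbreviation rank_condition :: bool where
  "rank_condition \<equiv> (\<forall>I\<subseteq>{1..m}. \<forall>K\<subseteq>{1..n}.
     int (submatrix_rank G (\<Union>i\<in>I. Sp i) (\<Union>k\<in>K. Tp k)) \<ge> int (\<Sum>i\<in>I. s i) + int (\<Sum>k\<in>K. t k) - int R)"

abbreviation row_selection :: "(nat \<Rightarrow> 'r set) \<Rightarrow> bool" where
  "row_selection ss \<equiv> (\<forall>i\<in>{1..m}. ss i \<subseteq> Sp i \<and> card (ss i) = s i)"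

abbreviation col_selection :: "(nat \<Rightarrow> 'c set) \<Rightarrow> bool" where
  "col_selection tt \<equiv> (\<forall>j\<in>{1..n}. tt j \<subseteq> Tp j \<and> card (tt j) = t j)"

lemma finite_Sp: "i \<in> {1..m} \<Longrightarrow> finite (Sp i)"
  using S_blocks finite_rows by (metis UN_upper finite_subset)

lemma finite_Tp: "j \<in> {1..n} \<Longrightarrow> finite (Tp j)"
  using T_blocks finite_cols by (metis UN_upper finite_subset)

lemma card_row_selection:
  assumes "row_selection ss" "I \<subseteq> {1..m}"
  shows "card (\<Union>i\<in>I. ss i) = (\<Sum>i\<in>I. s i)"
proof -
  have "card (\<Union>i\<in>I. ss i) = (\<Sum>i\<in>I. card (ss i))"
    using assms by (intro card_UN_blocks[OF disj_S _ finite_Sp]) auto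
  also have "\<dots> = (\<Sum>i\<in>I. s i)" using assms by (intro sum.cong) auto
  finally show ?thesis .
qed

lemma card_col_selection:
  assumes "col_selection tt" "K \<subseteq> {1..n}"
  shows "card (\<Union>j\<in>K. tt j) = (\<Sum>j\<in>K. t j)"
proof -
  have "card (\<Union>j\<in>K. tt j) = (\<Sum>j\<in>K. card (tt j))"
    using assms by (intro card_UN_blocks[OF disj_T _ finite_Tp]) auto
  also have "\<dots> = (\<Sum>j\<in>K. t j)" using assms by (intro sum.cong) auto
  finally show ?thesis .
qed

text \<open>Taking all row blocks and the single column block \<open>j\<close> in the rank condition shows that
  block \<open>j\<close> has at least \<open>t j\<close> columns.\<close>
lemma t_le_card:
  assumes cond: rank_condition and j: "j \<in> {1..n}"
  shows "t j \<le> card (Tp j)"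
proof -
  have "int (submatrix_rank G S (Tp j)) \<ge> int (t j)"
    using cond[rule_format, of "{1..m}" "{j}"] j S_blocks sum_s by (simp del: of_nat_sum)
  moreover have "submatrix_rank G S (Tp j) \<le> card (Tp j)"
    using T_blocks j by (intro submatrix_rank_le_card_cols) auto
  ultimately show ?thesis by linarith
qed

lemma nonsingular_selection_indep:
  assumes ss: "row_selection ss" and tt: "col_selection tt"
    and ns: "nonsingular_submatrix G (\<Union>i\<in>{1..m}. ss i) (\<Union>j\<in>{1..n}. tt j)"
  shows "ext_indep (Inl ` (\<Union>i\<in>{1..m}. ss i) \<union> Inr ` (T - (\<Union>j\<in>{1..n}. tt j)))"
proof -
  have AS: "(\<Union>i\<in>{1..m}. ss i) \<subseteq> S" using ss S_blocks by auto
  have BT: "(\<Union>j\<in>{1..n}. tt j) \<subseteq> T" using tt T_blocks by auto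
  have "card (\<Union>i\<in>{1..m}. ss i) = card (\<Union>j\<in>{1..n}. tt j)"
    using card_row_selection[OF ss] card_col_selection[OF tt] sum_s sum_t by simp
  hence "rows_lin_indep G (\<Union>i\<in>{1..m}. ss i) (\<Union>j\<in>{1..n}. tt j)"
    using ns nonsingular_submatrix_iff finite_subset[OF AS finite_rows] finite_subset[OF BT finite_cols]
    by blast
  thus ?thesis using ext_indep_iff[OF AS BT] by simp
qed

text \<open>Intersecting the independent set of the previous lemma with the set of rows
  \<open>S_I\<close> and unit vectors outside \<open>T_K\<close> bounds the rank of \<open>G(S_I,T_K)\<close> from below.\<close>
lemma necessity:
  assumes ss: "row_selection ss" and tt: "col_selection tt"
    and ns: "nonsingular_submatrix G (\<Union>i\<in>{1..m}. ss i) (\<Union>j\<in>{1..n}. tt j)"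
    and I: "I \<subseteq> {1..m}" and K: "K \<subseteq> {1..n}"
  shows "int (submatrix_rank G (\<Union>i\<in>I. Sp i) (\<Union>k\<in>K. Tp k)) \<ge> int (\<Sum>i\<in>I. s i) + int (\<Sum>k\<in>K. t k) - int R"
proof -
  define A where "A = (\<Union>i\<in>{1..m}. ss i)"
  define B where "B = (\<Union>j\<in>{1..n}. tt j)"
  define SI where "SI = (\<Union>i\<in>I. Sp i)"
  define TK where "TK = (\<Union>k\<in>K. Tp k)"
  have AS: "A \<subseteq> S" using ss S_blocks by (auto simp: A_def)
  have BT: "B \<subseteq> T" using tt T_blocks by (auto simp: B_def)
  have SIS: "SI \<subseteq> S" using I S_blocks by (auto simp: SI_def)
  have TKT: "TK \<subseteq> T" using K T_blocks by (auto simp: TK_def)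
  note fin = finite_subset[OF AS finite_rows] finite_subset[OF BT finite_cols]
    finite_subset[OF TKT finite_cols]
  have cB: "card B = R" unfolding B_def using card_col_selection[OF tt] sum_t by simp
  have indep: "ext_indep (Inl ` A \<union> Inr ` (T - B))"
    unfolding A_def B_def by (rule nonsingular_selection_indep[OF ss tt ns])
  define W where "W = Inl ` SI \<union> Inr ` (T - TK)"
  have "card ((Inl ` A \<union> Inr ` (T - B)) \<inter> W) \<le> M.rk W"
    using indep by (intro M.rk_ge) (auto intro: M.indep_subset)
  also have "\<dots> = card (T - TK) + submatrix_rank G SI TK" unfolding W_def by (rule rk_transversal[OF SIS TKT])
  finally have bound: "card (A \<inter> SI) + card (T - (B \<union> TK)) \<le> card (T - TK) + submatrix_rank G SI TK"
    unfolding W_def Inl_Inr_Int using fin(1) finite_cols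
    by (simp add: card_Inl_Inr Diff_Int_distrib Diff_Un Int_commute)
  have "A \<inter> SI = (\<Union>i\<in>I. ss i)"
    unfolding A_def SI_def using UN_blocks_Int[OF disj_S I, of ss] ss by auto
  hence cAI: "card (A \<inter> SI) = (\<Sum>i\<in>I. s i)" using card_row_selection[OF ss I] by simp
  have "B \<inter> TK = (\<Union>k\<in>K. tt k)"
    unfolding B_def TK_def using UN_blocks_Int[OF disj_T K, of tt] tt by auto
  hence cBK: "card (B \<inter> TK) = (\<Sum>k\<in>K. t k)" using card_col_selection[OF tt K] by simp
  have "card (T - (B \<union> TK)) + card (B \<union> TK) = card T"
    using finite_cols BT TKT by (intro card_Diff_add_card) auto
  moreover have "card (B \<union> TK) + card (B \<inter> TK) = card B + card TK" using card_Un_Int[OF fin(2,3)] by simp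
  moreover have "card (T - TK) + card TK = card T" using finite_cols TKT by (rule card_Diff_add_card)
  ultimately have "(\<Sum>i\<in>I. s i) + (\<Sum>k\<in>K. t k) \<le> submatrix_rank G SI TK + R"
    using bound cAI cBK cB by linarith
  thus ?thesis unfolding SI_def TK_def by linarith
qed

definition part_rank :: "('r + 'c) set \<Rightarrow> int" where
  "part_rank X = int (capped_count Sp s {1..m} (Inl -` X)
     + capped_count Tp (\<lambda>j. card (Tp j) - t j) {1..n} (Inr -` X))"

lemma matroid_rank_fn_part_rank: "matroid_rank_fn ground part_rank"
  unfolding part_rank_def using finite_rows finite_cols disj_S disj_T
  by (intro matroid_rank_fn_capped_pair) auto

lemma sum_col_complement:
  assumes cond: rank_condition and K: "K \<subseteq> {1..n}"
  shows "(\<Sum>k\<in>K. card (Tp k) - t k) + (\<Sum>k\<in>K. t k) = card (\<Union>k\<in>K. Tp k)"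
proof -
  have "(\<Sum>k\<in>K. card (Tp k) - t k) + (\<Sum>k\<in>K. t k) = (\<Sum>k\<in>K. card (Tp k))"
    unfolding sum.distrib[symmetric] using t_le_card[OF cond] K by (intro sum.cong) auto
  also have "\<dots> = card (\<Union>k\<in>K. Tp k)" using card_UN_blocks[OF disj_T _ finite_Tp K] by simp
  finally show ?thesis .
qed

lemma rk_cut_blocks:
  assumes Z: "Z \<subseteq> ground" and I: "I \<subseteq> {1..m}" and K: "K \<subseteq> {1..n}"
  shows "card (T - (\<Union>k\<in>K. Tp k)) + submatrix_rank G (\<Union>i\<in>I. Sp i) (\<Union>k\<in>K. Tp k) \<le>
    M.rk Z + (\<Sum>i\<in>I. card (Sp i \<inter> Inl -` (ground - Z)))
      + (\<Sum>j\<in>{1..n} - K. card (Tp j \<inter> Inr -` (ground - Z)))"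
proof -
  have SI: "(\<Union>i\<in>I. Sp i) \<subseteq> S" using I S_blocks by auto
  have TK: "(\<Union>k\<in>K. Tp k) \<subseteq> T" using K T_blocks by auto
  have compl: "T - (\<Union>k\<in>K. Tp k) = (\<Union>j\<in>{1..n} - K. Tp j)"
    unfolding T_blocks by (rule UN_blocks_Diff[OF disj_T K])
  have "card ((\<Union>i\<in>I. Sp i) \<inter> Inl -` (ground - Z)) = (\<Sum>i\<in>I. card (Sp i \<inter> Inl -` (ground - Z)))"
    by (rule card_Int_UN_blocks[OF disj_S _ finite_Sp I]) simp
  moreover have "card ((T - (\<Union>k\<in>K. Tp k)) \<inter> Inr -` (ground - Z)) =
      (\<Sum>j\<in>{1..n} - K. card (Tp j \<inter> Inr -` (ground - Z)))"
    unfolding compl by (rule card_Int_UN_blocks[OF disj_T _ finite_Tp]) auto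
  ultimately show ?thesis using rk_transversal_cut[OF Z SI TK] by simp
qed

text \<open>The rank condition implies the covering condition of the intersection theorem for the
  column matroid of \<open>[G | I]\<close> and the partition matroid, with target size \<open>card T\<close>: for a split
  \<open>Z\<close>, \<open>Y\<close> choose \<open>I\<close> as the row blocks and \<open>K\<close> as the column blocks that are saturated in \<open>Y\<close>
  (the caps bound \<open>part_rank Y\<close> there), and combine the cut bound with the rank condition.\<close>
lemma covers_ground:
  assumes cond: rank_condition
  shows "covers ground (\<lambda>X. int (M.rk X)) part_rank (card T)"
  unfolding covers_def
proof (intro allI impI)
  fix Z assume Z: "Z \<subseteq> ground"
  define Y where "Y = ground - Z"
  define a where "a i = card (Sp i \<inter> Inl -` Y)" for i
  define b where "b j = card (Tp j \<inter> Inr -` Y)" for j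
  define c where "c j = card (Tp j) - t j" for j
  define I where "I = {i\<in>{1..m}. a i < s i}"
  define K where "K = {j\<in>{1..n}. \<not> b j < c j}"
  have I: "I \<subseteq> {1..m}" and K: "K \<subseteq> {1..n}" by (auto simp: I_def K_def)
  have "part_rank Y = int ((\<Sum>i\<in>I. a i) + (\<Sum>i\<in>{1..m} - I. s i)
      + (\<Sum>j\<in>{1..n} - K. b j) + (\<Sum>j\<in>K. c j))"
  proof -
    have "{i\<in>{1..m}. \<not> a i < s i} = {1..m} - I" "{j\<in>{1..n}. b j < c j} = {1..n} - K"
      by (auto simp: I_def K_def)
    thus ?thesis
      using sum_min_split[of "{1..m}" a s] sum_min_split[of "{1..n}" b c]
      by (simp add: part_rank_def capped_count_def a_def b_def c_def I_def K_def Int_commute)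
  qed
  moreover have "card (T - (\<Union>k\<in>K. Tp k)) + submatrix_rank G (\<Union>i\<in>I. Sp i) (\<Union>k\<in>K. Tp k) \<le>
      M.rk Z + (\<Sum>i\<in>I. a i) + (\<Sum>j\<in>{1..n} - K. b j)"
    using rk_cut_blocks[OF Z I K] by (simp add: a_def b_def Y_def)
  moreover have "(\<Sum>i\<in>I. s i) + (\<Sum>k\<in>K. t k) \<le> submatrix_rank G (\<Union>i\<in>I. Sp i) (\<Union>k\<in>K. Tp k) + R"
    using cond[rule_format, OF I K] by linarith
  moreover have "(\<Sum>i\<in>{1..m} - I. s i) + (\<Sum>i\<in>I. s i) = R"
    using sum_s I sum.subset_diff[of I "{1..m}" s] by simp
  moreover have "(\<Sum>k\<in>K. c k) + (\<Sum>k\<in>K. t k) = card (\<Union>k\<in>K. Tp k)"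
    unfolding c_def by (rule sum_col_complement[OF cond K])
  moreover have "card (T - (\<Union>k\<in>K. Tp k)) + card (\<Union>k\<in>K. Tp k) = card T"
    using finite_cols K T_blocks by (intro card_Diff_add_card) auto
  ultimately show "int (card T) \<le> int (M.rk Z) + part_rank (ground - Z)"
    unfolding Y_def by linarith
qed

text \<open>A common independent set of size \<open>card T\<close> of both matroids meets every row block \<open>i\<close> in
  exactly \<open>s i\<close> rows and every column block \<open>j\<close> in exactly \<open>card (Tp j) - t j\<close> unit vectors:
  the caps can only be met with equality because they add up to \<open>card T\<close>.\<close>
lemma common_basis_blocks:
  assumes cond: rank_condition and X: "X \<subseteq> ground" "card X = card T" "part_rank X = int (card T)"
  shows "\<forall>i\<in>{1..m}. card (Sp i \<inter> Inl -` X) = s i"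
    and "\<forall>j\<in>{1..n}. card (Tp j \<inter> Inr -` X) = card (Tp j) - t j"
proof -
  define a where "a i = card (Sp i \<inter> Inl -` X)" for i
  define b where "b j = card (Tp j \<inter> Inr -` X)" for j
  define c where "c j = card (Tp j) - t j" for j
  have finX: "finite X" using X(1) M.finite_ground finite_subset by auto
  have finL: "finite (Inl -` X)" and finR: "finite (Inr -` X)"
    using finX by (auto intro: finite_vimageI)
  have subL: "Inl -` X \<subseteq> (\<Union>i\<in>{1..m}. Sp i)" and subR: "Inr -` X \<subseteq> (\<Union>j\<in>{1..n}. Tp j)"
    using X(1) S_blocks T_blocks by auto
  have cardX: "card X = card (Inl -` X) + card (Inr -` X)" by (rule card_vimage_Inl_Inr[OF finX])
  have "capped_count Sp s {1..m} (Inl -` X) \<le> card (Inl -` X)"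
    and "capped_count Tp c {1..n} (Inr -` X) \<le> card (Inr -` X)"
    using capped_count_le_card disj_S disj_T finL finR by auto
  moreover have "capped_count Sp s {1..m} (Inl -` X) + capped_count Tp c {1..n} (Inr -` X) = card X"
    using X(2,3) unfolding part_rank_def c_def by linarith
  ultimately have tight: "capped_count Sp s {1..m} (Inl -` X) = card (Inl -` X)"
    "capped_count Tp c {1..n} (Inr -` X) = card (Inr -` X)" using cardX by linarith+
  have a_le: "a i \<le> s i" if "i \<in> {1..m}" for i
    unfolding a_def using capped_count_tight[OF disj_S _ finL subL tight(1) that] by simp
  have b_le: "b j \<le> c j" if "j \<in> {1..n}" for j
    unfolding b_def using capped_count_tight[OF disj_T _ finR subR tight(2) that] by simp
  have "card (Inl -` X) = (\<Sum>i\<in>{1..m}. a i)"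
    using card_Int_UN_blocks[OF disj_S _ finite_Sp, of "{1..m}" "Inl -` X"] subL
    by (simp add: a_def Int_absorb1)
  moreover have "card (Inr -` X) = (\<Sum>j\<in>{1..n}. b j)"
    using card_Int_UN_blocks[OF disj_T _ finite_Tp, of "{1..n}" "Inr -` X"] subR
    by (simp add: b_def Int_absorb1)
  moreover have "(\<Sum>j\<in>{1..n}. c j) + (\<Sum>j\<in>{1..n}. t j) = card T"
    using sum_col_complement[OF cond order_refl] T_blocks by (simp add: c_def)
  moreover have "(\<Sum>i\<in>{1..m}. a i) \<le> (\<Sum>i\<in>{1..m}. s i)" using a_le by (rule sum_mono)
  moreover have "(\<Sum>j\<in>{1..n}. b j) \<le> (\<Sum>j\<in>{1..n}. c j)" using b_le by (rule sum_mono)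
  ultimately have "(\<Sum>i\<in>{1..m}. a i) = (\<Sum>i\<in>{1..m}. s i)" "(\<Sum>j\<in>{1..n}. b j) = (\<Sum>j\<in>{1..n}. c j)"
    using cardX X(2) sum_s sum_t by linarith+
  thus "\<forall>i\<in>{1..m}. card (Sp i \<inter> Inl -` X) = s i" "\<forall>j\<in>{1..n}. card (Tp j \<inter> Inr -` X) = card (Tp j) - t j"
    using sum_mono_inv[of a "{1..m}" s] sum_mono_inv[of b "{1..n}" c] a_le b_le
    by (auto simp: a_def b_def c_def)
qed

text \<open>The intersection theorem yields a common independent set \<open>X\<close> of size \<open>card T\<close>;
  its rows and the columns whose unit vectors it misses form the required nonsingular submatrix.\<close>
lemma sufficiency:
  assumes cond: rank_condition
  shows "\<exists>ss tt. row_selection ss \<and> col_selection tt \<and>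
           nonsingular_submatrix G (\<Union>i\<in>{1..m}. ss i) (\<Union>j\<in>{1..n}. tt j)"
proof -
  obtain X where X: "X \<subseteq> ground" "card X = card T" "M.rk X = card T" "part_rank X = int (card T)"
    using matroid_intersection[OF M.finite_ground M.matroid_rank_fn_rk matroid_rank_fn_part_rank
        covers_ground[OF cond]] by auto
  note blocks = common_basis_blocks[OF cond X(1,2,4)]
  define ss where "ss i = Sp i \<inter> Inl -` X" for i
  define tt where "tt j = Tp j - Inr -` X" for j
  have ss: "row_selection ss" using blocks(1) by (auto simp: ss_def)
  have tt: "col_selection tt"
  proof (intro ballI conjI)
    fix j assume j: "j \<in> {1..n}"
    have "card (Tp j - Inr -` X) = card (Tp j) - card (Tp j \<inter> Inr -` X)"
      using finite_Tp[OF j] by (metis card_Diff_subset_Int finite_Int Diff_Int2 Int_absorb)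
    thus "card (tt j) = t j" using blocks(2) j t_le_card[OF cond j] by (simp add: tt_def)
  qed (auto simp: tt_def)
  define A where "A = (\<Union>i\<in>{1..m}. ss i)"
  define B where "B = (\<Union>j\<in>{1..n}. tt j)"
  have A: "A = Inl -` X" using X(1) S_blocks by (auto simp: A_def ss_def)
  have B: "B = T - Inr -` X" using T_blocks by (auto simp: B_def tt_def)
  have AS: "A \<subseteq> S" and BT: "B \<subseteq> T" using X(1) by (auto simp: A B)
  have "Inl ` A \<union> Inr ` (T - B) = X" using X(1) A B by (subst (3) Inl_Inr_decomp) auto
  moreover have "ext_indep X" using X(1,2,3) M.indep_iff_rk by simp
  ultimately have "rows_lin_indep G A B" using ext_indep_iff[OF AS BT] by simp
  moreover have "card A = card B"
    using card_row_selection[OF ss] card_col_selection[OF tt] sum_s sum_t by (simp add: A_def B_def)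
  ultimately have "nonsingular_submatrix G A B"
    using nonsingular_submatrix_iff AS BT finite_rows finite_cols finite_subset by metis
  thus ?thesis using ss tt unfolding A_def B_def by blast
qed

end

theorem theorem1:
  fixes G :: "'r \<Rightarrow> 'c \<Rightarrow> 'a::field"
    and S :: "'r set" and T :: "'c set"
    and Sp :: "nat \<Rightarrow> 'r set" and Tp :: "nat \<Rightarrow> 'c set"
    and m n R :: nat and s t :: "nat \<Rightarrow> nat"
  assumes "finite S" and "finite T"
    and "S = (\<Union>i\<in>{1..m}. Sp i)" and "T = (\<Union>j\<in>{1..n}. Tp j)"
    and "\<forall>i\<in>{1..m}. \<forall>i'\<in>{1..m}. i \<noteq> i' \<longrightarrow> Sp i \<inter> Sp i' = {}"
    and "\<forall>j\<in>{1..n}. \<forall>j'\<in>{1..n}. j \<noteq> j' \<longrightarrow> Tp j \<inter> Tp j' = {}"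
    and "(\<Sum>i=1..m. s i) = R" and "(\<Sum>j=1..n. t j) = R"
  shows "(\<exists>ss :: nat \<Rightarrow> 'r set. \<exists>tt :: nat \<Rightarrow> 'c set.
            (\<forall>i\<in>{1..m}. ss i \<subseteq> Sp i \<and> card (ss i) = s i) \<and>
            (\<forall>j\<in>{1..n}. tt j \<subseteq> Tp j \<and> card (tt j) = t j) \<and>
            nonsingular_submatrix G (\<Union>i\<in>{1..m}. ss i) (\<Union>j\<in>{1..n}. tt j))
     \<longleftrightarrow>
     (\<forall>I\<subseteq>{1..m}. \<forall>K\<subseteq>{1..n}.
        int (submatrix_rank G (\<Union>i\<in>I. Sp i) (\<Union>k\<in>K. Tp k))
          \<ge> int (\<Sum>i\<in>I. s i) + int (\<Sum>k\<in>K. t k) - int R)"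
proof -
  interpret partitioned_matrix G S T Sp Tp m n R s t
    using assms by unfold_locales (auto simp: disjoint_family_on_def)
  show ?thesis using necessity sufficiency by blast
qed

end
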